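(* Let $\mu,\nu$ be Borel probability measures on $[0,1)$ with $\nu$ dyadically doubling ($\nu(\hat I)\le D_\nu\nu(I)$ for $I\in\mathcal{D}\setminus\{[0,1)\}$). Let $I_0=[0,1)\supset I_1\supset I_2\supset\cdots$ be nested intervals with $I_j\in\mathcal{D}$ of length $2^{-j}$, and for $j\ge0$ let $\psi_j\colon\mathbb{R}\to[0,\infty)$ be $L_j$-Lipschitz and supported on $\overline{I_j}$, such that $\Psi := \sum_{j\ge0}\psi_j$ is bounded. Set $\Psi_k := \sum_{j\ge k}\psi_j$. Then for every $N\in\{0,1,2,\ldots\}\cup\{\infty\}$, $$\Big|\int\Psi\,d\mu-\int\Psi\,d\nu\Big|\le\sum_{k=0}^N\frac{L_k}{2^k}\alpha_{\mu,\nu}(I_k)\mu(I_k)+\sum_{k=0}^N\Big(\frac{1}{\nu(I_{k+1})}\int\Psi_{k+1}\,d\nu\Big)\Delta_{\mu,\nu}(I_k)\mu(I_k)+2\|\Psi\|_\infty\,\mu(I_{N+1}),$$ where for $N=\infty$, $I_{N+1}$ means $\bigcap_j I_j$.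
   Context: $\mathcal{D}$: dyadic intervals $[j2^{-k},(j+1)2^{-k})\subset[0,1)$, $k\ge0$; $\hat I$ is the parent of $I$, and $I_-$ is the left half of $I$. $\Delta_{\mu,\nu}(I) := |\mu(I_-)/\mu(I)-\nu(I_-)/\nu(I)|$, with the convention that $\Delta_{\mu,\nu}(I)\mu(I):=0$ if $\mu(I)=0$. Wasserstein distance: $\mathbb{W}_1(\nu_1,\nu_2) := \sup_\psi |\int\psi\,d\nu_1 - \int\psi\,d\nu_2|$ over all $1$-Lipschitz $\psi\colon\mathbb{R}\to\mathbb{R}$ supported on $[0,1]$. $T_I$ is the increasing affine map from $\overline I$ onto $[0,1]$, $\mu_I := T_{I\sharp}(\mu|_I)/\mu(I)$, $\nu_I := T_{I\sharp}(\nu|_I)/\nu(I)$ (zero if the mass vanishes), $\alpha_{\mu,\nu}(I) := \mathbb{W}_1(\mu_I,\nu_I)$. *)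

theory Defs
  imports "HOL-Probability.Probability"
begin

definition dyadic :: "nat \<Rightarrow> nat \<Rightarrow> real set" where
  "dyadic k j = {real j / 2 ^ k ..< (real j + 1) / 2 ^ k}"

definition dyadic_intervals :: "real set set" where
  "dyadic_intervals = {dyadic k j | k j. j < 2 ^ k}"

definition left_half :: "real set \<Rightarrow> real set" where
  "left_half I = {Inf I ..< (Inf I + Sup I) / 2}"

text \<open>Dyadic doubling: nu(parent I) <= D nu(I) for every dyadic I other than [0,1).
  The parent of dyadic (k+1) j is dyadic k (j div 2).\<close>
definition dyadic_doubling :: "real measure \<Rightarrow> real \<Rightarrow> bool" where
  "dyadic_doubling \<nu> D \<longleftrightarrow>
     (\<forall>k j. j < 2 ^ (Suc k) \<longrightarrow>
        measure \<nu> (dyadic k (j div 2)) \<le> D * measure \<nu> (dyadic (Suc k) j))"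

definition dyDelta :: "real measure \<Rightarrow> real measure \<Rightarrow> real set \<Rightarrow> real" where
  "dyDelta \<mu> \<nu> I =
     \<bar>measure \<mu> (left_half I) / measure \<mu> I - measure \<nu> (left_half I) / measure \<nu> I\<bar>"

definition dyDelta_mass :: "real measure \<Rightarrow> real measure \<Rightarrow> real set \<Rightarrow> real" where
  "dyDelta_mass \<mu> \<nu> I = (if measure \<mu> I = 0 then 0 else dyDelta \<mu> \<nu> I * measure \<mu> I)"

definition W1 :: "real measure \<Rightarrow> real measure \<Rightarrow> real" where
  "W1 \<nu>1 \<nu>2 = Sup {\<bar>integral\<^sup>L \<nu>1 \<psi> - integral\<^sup>L \<nu>2 \<psi>\<bar> | \<psi>.
       1-lipschitz_on UNIV \<psi> \<and> (\<forall>x. x \<notin> {0..1} \<longrightarrow> \<psi> x = 0)}"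

definition T_map :: "real set \<Rightarrow> real \<Rightarrow> real" where
  "T_map I x = (x - Inf I) / (Sup I - Inf I)"

text \<open>mu_I = (T_I)_# (mu restricted to I) / mu(I); the zero measure if mu(I) = 0.\<close>
definition blowup :: "real measure \<Rightarrow> real set \<Rightarrow> real measure" where
  "blowup \<mu> I = scale_measure (ennreal (1 / measure \<mu> I))
                  (distr (restrict_space \<mu> I) borel (T_map I))"

definition dyalpha :: "real measure \<Rightarrow> real measure \<Rightarrow> real set \<Rightarrow> real" where
  "dyalpha \<mu> \<nu> I = W1 (blowup \<mu> I) (blowup \<nu> I)"

end

theory Submission
  imports Defs
begin

text \<open>
  Put \<open>E\<^sub>k = \<integral>\<Psi>\<^sub>k d\<mu> - (\<mu>(I\<^sub>k)/\<nu>(I\<^sub>k)) \<integral>\<Psi>\<^sub>k d\<nu>\<close>, so that \<open>E\<^sub>0\<close> is the quantity to be bounded.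
  Since \<open>\<Psi>\<^sub>k = \<psi>\<^sub>k + \<Psi>\<^sub>k\<^sub>+\<^sub>1\<close>, the increment \<open>E\<^sub>k - E\<^sub>k\<^sub>+\<^sub>1\<close> is the same discrepancy for the single
  bump \<open>\<psi>\<^sub>k\<close>, plus \<open>\<integral>\<Psi>\<^sub>k\<^sub>+\<^sub>1 d\<nu>\<close> times \<open>\<mu>(I\<^sub>k\<^sub>+\<^sub>1)/\<nu>(I\<^sub>k\<^sub>+\<^sub>1) - \<mu>(I\<^sub>k)/\<nu>(I\<^sub>k)\<close>. Rescaling \<open>I\<^sub>k\<close>
  to \<open>[0,1]\<close> turns \<open>\<psi>\<^sub>k\<close> into an \<open>L\<^sub>k 2\<^sup>-\<^sup>k\<close>-Lipschitz test function for \<open>\<alpha>(I\<^sub>k)\<close>; and as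
  \<open>I\<^sub>k\<^sub>+\<^sub>1\<close> is one of the two halves of \<open>I\<^sub>k\<close>, the mass defect is exactly \<open>\<Delta>(I\<^sub>k)\<mu>(I\<^sub>k)\<close>.
  Telescoping, and bounding the remainder \<open>E\<^sub>N\<^sub>+\<^sub>1\<close> by \<open>\<parallel>\<Psi>\<parallel>\<^sub>\<infinity> \<mu>(I\<^sub>N\<^sub>+\<^sub>1)\<close>, gives the finite
  bound; continuity of \<open>\<mu>\<close> from above gives \<open>N = \<infinity>\<close>. Doubling of \<open>\<nu>\<close> is only used to
  make \<open>\<nu>\<close> positive on every dyadic interval.
\<close>

lemma lipschitz_on_borel_measurable:
  fixes g :: "real \<Rightarrow> real"
  assumes "L-lipschitz_on UNIV g"
  shows "g \<in> borel_measurable borel"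
  using assms lipschitz_on_continuous_on borel_measurable_continuous_onI by blast

lemma lipschitz_zero_outside_atLeastLessThan:
  fixes f :: "real \<Rightarrow> real"
  assumes lip: "L-lipschitz_on UNIV f" and zero: "\<And>x. x \<notin> {a..b} \<Longrightarrow> f x = 0"
    and x: "x \<notin> {a..<b}"
  shows "f x = 0"
proof (cases "x = b")
  case True
  have "f b = 0"
  proof (rule ccontr)
    assume ne: "f b \<noteq> 0"
    have L0: "0 \<le> L" using lip lipschitz_on_nonneg by blast
    define e where "e = \<bar>f b\<bar> / (L + 1)"
    have e0: "e > 0" using ne L0 by (simp add: e_def)
    have "dist (f b) (f (b + e)) \<le> L * dist b (b + e)" using lipschitz_onD[OF lip] by blast
    moreover have "f (b + e) = 0" using zero e0 by auto
    ultimately have "\<bar>f b\<bar> \<le> L * e" using e0 by (simp add: dist_real_def)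
    also have "L * e < \<bar>f b\<bar>" using ne L0 by (simp add: e_def field_simps)
    finally show False by simp
  qed
  with True show ?thesis by simp
qed (use zero x in auto)

lemma lipschitz_zero_outside_unit_interval_bound:
  fixes g :: "real \<Rightarrow> real"
  assumes "c-lipschitz_on UNIV g" and "\<And>x. x \<notin> {0..1} \<Longrightarrow> g x = 0"
  shows "\<bar>g x\<bar> \<le> 2 * c"
proof (cases "x \<in> {0..1}")
  case True
  have "\<bar>g x\<bar> = dist (g x) (g 2)" using assms(2) by (simp add: dist_real_def)
  also have "\<dots> \<le> c * dist x 2" using lipschitz_onD[OF assms(1)] by blast
  also have "\<dots> \<le> c * 2"
    using True lipschitz_on_nonneg[OF assms(1)] by (intro mult_left_mono) (auto simp: dist_real_def)
  finally show ?thesis by simp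
qed (use assms lipschitz_on_nonneg in auto)

lemma integrable_bounded_borel:
  fixes f :: "real \<Rightarrow> real"
  assumes "finite_measure M" "sets M = sets borel" "f \<in> borel_measurable borel"
    and "\<And>x. \<bar>f x\<bar> \<le> B"
  shows "integrable M f"
proof -
  interpret finite_measure M by fact
  have "f \<in> borel_measurable M" using assms(2,3) measurable_cong_sets by blast
  then show ?thesis by (intro integrable_const_bound[where B = B]) (use assms(4) in auto)
qed

lemma integral_le_bound_times_measure:
  fixes f :: "real \<Rightarrow> real"
  assumes M: "finite_measure M" "sets M = sets borel" and A: "A \<in> sets borel"
    and f: "f \<in> borel_measurable borel" "\<And>x. 0 \<le> f x" "\<And>x. f x \<le> C"
    and zero: "\<And>x. x \<notin> A \<Longrightarrow> f x = 0"
  shows "integral\<^sup>L M f \<le> C * measure M A"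
proof -
  interpret finite_measure M by fact
  have AM: "A \<in> sets M" using A M(2) by simp
  have C0: "0 \<le> C" using f(2,3)[of 0] by linarith
  have "integral\<^sup>L M f \<le> integral\<^sup>L M (\<lambda>x. C * indicator A x)"
  proof (rule integral_mono)
    show "integrable M f"
      by (rule integrable_bounded_borel[OF M f(1), where B = C]) (use f(2,3) abs_of_nonneg in metis)
    show "integrable M (\<lambda>x. C * indicator A x)"
      using AM by (intro integrable_mult_right integrable_real_indicator)
        (auto simp: emeasure_finite less_top[symmetric])
    show "f x \<le> C * indicator A x" for x using f(3) zero by (cases "x \<in> A") auto
  qed
  also have "\<dots> = C * measure M A" using AM by simp
  finally show ?thesis .
qed

lemma dyadic_eq: "dyadic k m = {real m / 2^k ..< real m / 2^k + 1 / 2^k}"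
  by (simp add: dyadic_def add_divide_distrib)

lemma dyadic_Inf: "Inf (dyadic k m) = real m / 2^k"
  unfolding dyadic_def by (rule cInf_atLeastLessThan) (simp add: divide_strict_right_mono)

lemma dyadic_Sup: "Sup (dyadic k m) = (real m + 1) / 2^k"
  unfolding dyadic_def by (rule cSup_atLeastLessThan) (simp add: divide_strict_right_mono)

lemma closure_dyadic: "closure (dyadic k m) = {real m / 2^k .. real m / 2^k + 1 / 2^k}"
  unfolding dyadic_eq by (rule closure_atLeastLessThan) simp

lemma dyadic_in_borel [measurable]: "dyadic k m \<in> sets borel"
  by (simp add: dyadic_def)

lemma left_half_dyadic: "left_half (dyadic k m) = dyadic (Suc k) (2 * m)"
  unfolding left_half_def dyadic_Inf dyadic_Sup dyadic_def by (simp add: field_simps)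

lemma dyadic_halves:
  "dyadic k m = dyadic (Suc k) (2 * m) \<union> dyadic (Suc k) (2 * m + 1)"
  "dyadic (Suc k) (2 * m) \<inter> dyadic (Suc k) (2 * m + 1) = {}"
  unfolding dyadic_def by (auto simp: field_simps)

lemma dyadic_subset_child:
  assumes "dyadic (Suc k) m' \<subseteq> dyadic k m"
  shows "m' = 2 * m \<or> m' = 2 * m + 1"
proof -
  have "\<not> (real m' + 1) / 2^Suc k \<le> real m' / 2^Suc k" by (simp add: divide_le_cancel)
  then have lo: "real m / 2^k \<le> real m' / 2^Suc k"
    and hi: "(real m' + 1) / 2^Suc k \<le> (real m + 1) / 2^k"
    using atLeastLessThan_subset_iff[OF assms[unfolded dyadic_def]] by blast+
  have "real m / 2^k * 2^Suc k \<le> real m' / 2^Suc k * 2^Suc k"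
    using lo by (intro mult_right_mono) auto
  moreover have "(real m' + 1) / 2^Suc k * 2^Suc k \<le> (real m + 1) / 2^k * 2^Suc k"
    using hi by (intro mult_right_mono) auto
  ultimately have "real m * 2 \<le> real m' \<and> real m' + 1 \<le> (real m + 1) * 2"
    by simp
  then show ?thesis by (auto simp flip: of_nat_le_iff)
qed

lemma lipschitz_zero_outside_dyadic:
  fixes f :: "real \<Rightarrow> real"
  assumes lip: "L-lipschitz_on UNIV f" and supp: "\<And>x. x \<notin> closure (dyadic k m) \<Longrightarrow> f x = 0"
    and x: "x \<notin> dyadic k m"
  shows "f x = 0"
  using lipschitz_zero_outside_atLeastLessThan[OF lip, of "real m / 2^k" "real m / 2^k + 1 / 2^k"]
    supp x by (simp add: closure_dyadic dyadic_eq)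

lemma dyadic_child_subset: "m' = 2 * m \<or> m' = 2 * m + 1 \<Longrightarrow> dyadic (Suc k) m' \<subseteq> dyadic k m"
  using dyadic_halves(1) by blast

lemma decseq_dyadic_chain:
  assumes "\<And>k. I k = dyadic k (m k)" "\<And>k. m (Suc k) = 2 * m k \<or> m (Suc k) = 2 * m k + 1"
  shows "decseq I"
  using assms dyadic_child_subset by (intro decseq_SucI) simp

lemma nested_dyadic_chain:
  assumes "\<forall>j. \<exists>m < 2 ^ j. I j = dyadic j m" and "\<forall>j. I (Suc j) \<subseteq> I j"
  obtains m where "\<And>j. m j < 2 ^ j" "\<And>j. I j = dyadic j (m j)"
    "\<And>j. m (Suc j) = 2 * m j \<or> m (Suc j) = 2 * m j + 1"
proof -
  obtain m where "\<And>j. m j < 2 ^ j" "\<And>j. I j = dyadic j (m j)"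
    using assms(1) by metis
  moreover from this have "m (Suc j) = 2 * m j \<or> m (Suc j) = 2 * m j + 1" for j
    using assms(2) dyadic_subset_child by metis
  ultimately show ?thesis by (rule that)
qed

lemma dyadic_doubling_measure_pos:
  assumes dbl: "dyadic_doubling \<nu> D" and top: "measure \<nu> (dyadic 0 0) > 0" and "j < 2 ^ k"
  shows "measure \<nu> (dyadic k j) > 0"
  using \<open>j < 2 ^ k\<close>
proof (induction k arbitrary: j)
  case 0
  then show ?case using top by simp
next
  case (Suc k)
  have "measure \<nu> (dyadic k (j div 2)) > 0" using Suc by simp
  moreover have "measure \<nu> (dyadic k (j div 2)) \<le> D * measure \<nu> (dyadic (Suc k) j)"
    using dbl Suc.prems unfolding dyadic_doubling_def by blast
  ultimately have "measure \<nu> (dyadic (Suc k) j) \<noteq> 0" by auto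
  then show ?case using measure_nonneg[of \<nu> "dyadic (Suc k) j"] by linarith
qed

lemma W1_bdd_above:
  fixes M1 M2 :: "real measure"
  assumes "finite_measure M1" "sets M1 = sets borel" "finite_measure M2" "sets M2 = sets borel"
  shows "bdd_above {\<bar>integral\<^sup>L M1 \<psi> - integral\<^sup>L M2 \<psi>\<bar> | \<psi> :: real \<Rightarrow> real.
           1-lipschitz_on UNIV \<psi> \<and> (\<forall>x. x \<notin> {0..1} \<longrightarrow> \<psi> x = 0)}"
proof (rule bdd_aboveI, safe)
  fix \<psi> :: "real \<Rightarrow> real"
  assume lip: "1-lipschitz_on UNIV \<psi>" and zero: "\<forall>x. x \<notin> {0..1} \<longrightarrow> \<psi> x = 0"
  have bound: "\<bar>\<psi> x\<bar> \<le> 2" for x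
    using lipschitz_zero_outside_unit_interval_bound[OF lip] zero by fastforce
  have integral_bound: "\<bar>integral\<^sup>L M \<psi>\<bar> \<le> 2 * measure M (space M)"
    if "finite_measure M" "sets M = sets borel" for M :: "real measure"
  proof -
    interpret finite_measure M by fact
    have "integrable M \<psi>"
      by (rule integrable_bounded_borel[OF that lipschitz_on_borel_measurable[OF lip] bound])
    then have "\<bar>integral\<^sup>L M \<psi>\<bar> \<le> integral\<^sup>L M (\<lambda>_. 2)"
      by (intro integral_abs_bound_integral) (use bound in auto)
    then show ?thesis by simp
  qed
  show "\<bar>integral\<^sup>L M1 \<psi> - integral\<^sup>L M2 \<psi>\<bar>
      \<le> 2 * measure M1 (space M1) + 2 * measure M2 (space M2)"
    using integral_bound[OF assms(1,2)] integral_bound[OF assms(3,4)] by linarith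
qed

lemma W1_upper:
  assumes "finite_measure M1" "sets M1 = sets borel" "finite_measure M2" "sets M2 = sets borel"
    and "1-lipschitz_on UNIV g" "\<And>x. x \<notin> {0..1} \<Longrightarrow> g x = 0"
  shows "\<bar>integral\<^sup>L M1 g - integral\<^sup>L M2 g\<bar> \<le> W1 M1 M2"
  unfolding W1_def by (rule cSup_upper[OF _ W1_bdd_above[OF assms(1-4)]]) (use assms(5,6) in blast)

lemma W1_nonneg:
  assumes "finite_measure M1" "sets M1 = sets borel" "finite_measure M2" "sets M2 = sets borel"
  shows "0 \<le> W1 M1 M2"
  using W1_upper[OF assms, of "\<lambda>_. 0"] by (simp add: lipschitz_on_def)

lemma W1_lipschitz_bound:
  assumes M: "finite_measure M1" "sets M1 = sets borel" "finite_measure M2" "sets M2 = sets borel"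
    and lip: "c-lipschitz_on UNIV h" and zero: "\<And>x. x \<notin> {0..1} \<Longrightarrow> h x = 0"
  shows "\<bar>integral\<^sup>L M1 h - integral\<^sup>L M2 h\<bar> \<le> c * W1 M1 M2"
proof (cases "c = 0")
  case True
  then have "h = (\<lambda>_. 0)"
    using lipschitz_zero_outside_unit_interval_bound[OF lip zero] by fastforce
  then show ?thesis using True by simp
next
  case False
  then have c0: "c > 0" using lipschitz_on_nonneg[OF lip] by simp
  have "(1 / c * c)-lipschitz_on UNIV (\<lambda>x. 1 / c * h x)"
    using lipschitz_on_cmult_real[OF lip, of "1 / c"] c0 by simp
  then have "1-lipschitz_on UNIV (\<lambda>x. h x / c)" using c0 by simp
  then have "\<bar>integral\<^sup>L M1 (\<lambda>x. h x / c) - integral\<^sup>L M2 (\<lambda>x. h x / c)\<bar> \<le> W1 M1 M2"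
    by (rule W1_upper[OF M]) (use zero in simp)
  then have "\<bar>integral\<^sup>L M1 h - integral\<^sup>L M2 h\<bar> / c \<le> W1 M1 M2"
    using c0 by (simp add: diff_divide_distrib[symmetric])
  then show ?thesis using c0 by (simp add: divide_le_eq mult.commute)
qed

lemma sets_blowup [simp]: "sets (blowup M I) = sets borel"
  by (simp add: blowup_def)

lemma T_map_borel_measurable [measurable]: "T_map I \<in> borel_measurable borel"
  unfolding T_map_def by measurable

lemma finite_measure_blowup:
  fixes M :: "real measure"
  assumes "finite_measure M" "sets M = sets borel" "I \<in> sets borel"
  shows "finite_measure (blowup M I)"
proof -
  have "T_map I \<in> borel_measurable M" by (simp add: measurable_cong_sets[OF assms(2) refl])
  interpret finite_measure "restrict_space M I"
    using assms by (intro finite_measure_restrict_space) auto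
  interpret finite_measure "distr (restrict_space M I) borel (T_map I)"
    by (intro finite_measure_distr measurable_restrict_space1) fact
  show ?thesis unfolding blowup_def
    by (rule finite_measureI) (simp add: space_scale_measure ennreal_mult_eq_top_iff)
qed

lemma integral_blowup:
  fixes M :: "real measure" and f h :: "real \<Rightarrow> real"
  assumes M: "finite_measure M" "sets M = sets borel" and I: "I \<in> sets borel"
    and meas: "f \<in> borel_measurable borel" "h \<in> borel_measurable borel"
    and h_nonneg: "\<And>x. 0 \<le> h x"
    and f_zero: "\<And>x. x \<notin> I \<Longrightarrow> f x = 0" and f_eq: "\<And>x. x \<in> I \<Longrightarrow> f x = h (T_map I x)"
  shows "integral\<^sup>L M f = measure M I * integral\<^sup>L (blowup M I) h"
proof -
  interpret finite_measure M by fact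
  have f_nonneg: "0 \<le> f x" for x using f_zero f_eq h_nonneg by (cases "x \<in> I") auto
  have T_meas: "T_map I \<in> measurable (restrict_space M I) borel"
    by (intro measurable_restrict_space1) (simp add: measurable_cong_sets[OF M(2) refl])
  have "f \<in> borel_measurable M" using meas(1) by (simp add: measurable_cong_sets[OF M(2) refl])
  then have integral_f: "integral\<^sup>L M f = enn2real (\<integral>\<^sup>+x. ennreal (f x) \<partial>M)"
    by (intro integral_eq_nn_integral) (use f_nonneg in auto)
  have "(\<integral>\<^sup>+x. ennreal (h x) \<partial>blowup M I)
      = ennreal (1 / measure M I) * (\<integral>\<^sup>+x. ennreal (h x) \<partial>distr (restrict_space M I) borel (T_map I))"
    unfolding blowup_def using meas(2) by (intro nn_integral_scale_measure) simp
  also have "(\<integral>\<^sup>+x. ennreal (h x) \<partial>distr (restrict_space M I) borel (T_map I))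
      = (\<integral>\<^sup>+x. ennreal (h (T_map I x)) \<partial>restrict_space M I)"
    using meas(2) by (intro nn_integral_distr[OF T_meas]) simp
  also have "\<dots> = (\<integral>\<^sup>+x. ennreal (h (T_map I x)) * indicator I x \<partial>M)"
    using I M(2) by (intro nn_integral_restrict_space) (simp add: sets.Int_space_eq2)
  also have "\<dots> = (\<integral>\<^sup>+x. ennreal (f x) \<partial>M)"
    by (rule nn_integral_cong) (auto simp: indicator_def f_eq f_zero)
  finally have nn: "(\<integral>\<^sup>+x. ennreal (h x) \<partial>blowup M I) = ennreal (1 / measure M I) * (\<integral>\<^sup>+x. ennreal (f x) \<partial>M)" .
  have integral_h: "integral\<^sup>L (blowup M I) h = enn2real (\<integral>\<^sup>+x. ennreal (h x) \<partial>blowup M I)"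
    using meas(2) by (intro integral_eq_nn_integral)
      (auto simp: h_nonneg measurable_cong_sets[OF sets_blowup refl])
  show ?thesis
  proof (cases "measure M I = 0")
    case True
    then have "AE x in M. x \<notin> I"
      using I M(2) by (intro AE_not_in) (simp add: null_sets_def emeasure_eq_measure)
    then have "(\<integral>\<^sup>+x. ennreal (f x) \<partial>M) = (\<integral>\<^sup>+x. 0 \<partial>M)"
      by (intro nn_integral_cong_AE) (auto simp: f_zero)
    then show ?thesis using integral_f True by simp
  next
    case False
    then have "measure M I > 0" using measure_nonneg[of M I] by linarith
    then show ?thesis unfolding integral_f integral_h nn by (simp add: enn2real_mult)
  qed
qed

definition local_discrepancy :: "real measure \<Rightarrow> real measure \<Rightarrow> real set \<Rightarrow> (real \<Rightarrow> real) \<Rightarrow> real"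
  where "local_discrepancy \<mu> \<nu> A f = integral\<^sup>L \<mu> f - measure \<mu> A / measure \<nu> A * integral\<^sup>L \<nu> f"

lemma local_discrepancy_dyadic_bump:
  fixes \<mu> \<nu> :: "real measure" and \<psi> :: "real \<Rightarrow> real"
  assumes \<mu>: "finite_measure \<mu>" "sets \<mu> = sets borel"
    and \<nu>: "finite_measure \<nu>" "sets \<nu> = sets borel" "measure \<nu> (dyadic k m) > 0"
    and lip: "L-lipschitz_on UNIV \<psi>" and nonneg: "\<And>x. 0 \<le> \<psi> x"
    and supp: "\<And>x. x \<notin> closure (dyadic k m) \<Longrightarrow> \<psi> x = 0"
  shows "\<bar>local_discrepancy \<mu> \<nu> (dyadic k m) \<psi>\<bar>
    \<le> L / 2^k * dyalpha \<mu> \<nu> (dyadic k m) * measure \<mu> (dyadic k m)"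
proof -
  define I where "I = dyadic k m"
  define lo where "lo = real m / 2^k"
  define h where "h t = \<psi> (lo + t / 2^k)" for t
  have h_eq: "\<psi> x = h (T_map I x)" if "x \<in> I" for x
    unfolding h_def T_map_def I_def dyadic_Inf dyadic_Sup lo_def by (simp add: field_simps)
  have zero: "\<psi> x = 0" if "x \<notin> I" for x
    using lipschitz_zero_outside_dyadic[OF lip supp] that by (simp add: I_def)
  have h_lip: "(L / 2^k)-lipschitz_on UNIV h"
  proof (rule lipschitz_onI)
    fix s t :: real
    have "dist (h s) (h t) \<le> L * dist (lo + s / 2^k) (lo + t / 2^k)"
      unfolding h_def using lipschitz_onD[OF lip] by blast
    also have "dist (lo + s / 2^k) (lo + t / 2^k) = dist s t / 2^k"
      by (simp add: dist_real_def diff_divide_distrib[symmetric] abs_divide)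
    finally show "dist (h s) (h t) \<le> L / 2 ^ k * dist s t" by simp
  qed (use lipschitz_on_nonneg[OF lip] in simp)
  have h_zero: "h t = 0" if "t \<notin> {0..1}" for t
  proof -
    have "lo + t / 2^k \<notin> closure (dyadic k m)"
      using that unfolding closure_dyadic lo_def by (auto simp: field_simps)
    then show ?thesis using supp h_def by simp
  qed
  have h_meas: "h \<in> borel_measurable borel" by (rule lipschitz_on_borel_measurable[OF h_lip])
  have h_nonneg: "0 \<le> h t" for t using nonneg by (simp add: h_def)
  have "I \<in> sets borel" by (simp add: I_def)
  note blowup_integral = integral_blowup[OF _ _ this lipschitz_on_borel_measurable[OF lip]
      h_meas h_nonneg zero h_eq]
  note blowup_finite = finite_measure_blowup[OF _ _ \<open>I \<in> sets borel\<close>]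
  have "integral\<^sup>L \<mu> \<psi> = measure \<mu> I * integral\<^sup>L (blowup \<mu> I) h"
    by (rule blowup_integral[OF \<mu>])
  moreover have "integral\<^sup>L \<nu> \<psi> = measure \<nu> I * integral\<^sup>L (blowup \<nu> I) h"
    by (rule blowup_integral[OF \<nu>(1,2)])
  ultimately have "local_discrepancy \<mu> \<nu> I \<psi>
      = measure \<mu> I * (integral\<^sup>L (blowup \<mu> I) h - integral\<^sup>L (blowup \<nu> I) h)"
    unfolding local_discrepancy_def using \<nu>(3) by (simp add: I_def field_simps)
  then have "\<bar>local_discrepancy \<mu> \<nu> I \<psi>\<bar>
      = measure \<mu> I * \<bar>integral\<^sup>L (blowup \<mu> I) h - integral\<^sup>L (blowup \<nu> I) h\<bar>"
    by (simp add: abs_mult)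
  also have "\<dots> \<le> measure \<mu> I * (L / 2^k * W1 (blowup \<mu> I) (blowup \<nu> I))"
    by (intro mult_left_mono W1_lipschitz_bound[OF blowup_finite[OF \<mu>] sets_blowup
        blowup_finite[OF \<nu>(1,2)] sets_blowup h_lip]) (auto intro: h_zero)
  finally show ?thesis unfolding dyalpha_def I_def by (simp add: mult_ac)
qed

text \<open>Only the left half enters \<open>\<Delta>\<close>; the right half has the opposite mass defect.\<close>
lemma dyadic_child_mass_defect:
  fixes \<mu> \<nu> :: "real measure"
  assumes \<mu>: "finite_measure \<mu>" "sets \<mu> = sets borel"
    and \<nu>: "finite_measure \<nu>" "sets \<nu> = sets borel" "measure \<nu> (dyadic k m) > 0"
    and child: "m' = 2 * m \<or> m' = 2 * m + 1"
  shows "\<bar>measure \<mu> (dyadic (Suc k) m') - measure \<mu> (dyadic k m) * measure \<nu> (dyadic (Suc k) m')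
            / measure \<nu> (dyadic k m)\<bar> = dyDelta_mass \<mu> \<nu> (dyadic k m)"
proof -
  interpret M: finite_measure \<mu> by fact
  interpret N: finite_measure \<nu> by fact
  define I where "I = dyadic k m"
  define J where "J = dyadic (Suc k) (2 * m)"
  define J' where "J' = dyadic (Suc k) (2 * m + 1)"
  have \<mu>_split: "measure \<mu> I = measure \<mu> J + measure \<mu> J'"
    using dyadic_halves[of k m] \<mu>(2) by (simp add: I_def J_def J'_def M.finite_measure_Union)
  have \<nu>_split: "measure \<nu> I = measure \<nu> J + measure \<nu> J'"
    using dyadic_halves[of k m] \<nu>(2) by (simp add: I_def J_def J'_def N.finite_measure_Union)
  have left: "\<bar>measure \<mu> J - measure \<mu> I * measure \<nu> J / measure \<nu> I\<bar> = dyDelta_mass \<mu> \<nu> I"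
  proof (cases "measure \<mu> I = 0")
    case True
    then have "measure \<mu> J = 0" using \<mu>_split measure_nonneg[of \<mu> J] measure_nonneg[of \<mu> J']
      by linarith
    then show ?thesis using True by (simp add: dyDelta_mass_def)
  next
    case False
    have "measure \<mu> J - measure \<mu> I * measure \<nu> J / measure \<nu> I
        = (measure \<mu> J / measure \<mu> I - measure \<nu> J / measure \<nu> I) * measure \<mu> I"
      using False \<nu>(3) by (simp add: I_def field_simps)
    then show ?thesis using False
      by (simp add: dyDelta_mass_def dyDelta_def abs_mult I_def J_def left_half_dyadic)
  qed
  have "measure \<mu> J' - measure \<mu> I * measure \<nu> J' / measure \<nu> I
      = - (measure \<mu> J - measure \<mu> I * measure \<nu> J / measure \<nu> I)"
    using \<nu>(3) \<mu>_split \<nu>_split by (simp add: I_def field_simps)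
  then have "\<bar>measure \<mu> J' - measure \<mu> I * measure \<nu> J' / measure \<nu> I\<bar> = dyDelta_mass \<mu> \<nu> I"
    using left by (metis abs_minus_cancel)
  with left child show ?thesis unfolding I_def J_def J'_def by blast
qed

lemma local_discrepancy_step:
  fixes \<mu> \<nu> :: "real measure" and \<psi> F :: "real \<Rightarrow> real"
  assumes \<mu>: "finite_measure \<mu>" "sets \<mu> = sets borel"
    and \<nu>: "finite_measure \<nu>" "sets \<nu> = sets borel"
    and pos: "measure \<nu> (dyadic k m) > 0" "measure \<nu> (dyadic (Suc k) m') > 0"
    and child: "m' = 2 * m \<or> m' = 2 * m + 1"
    and lip: "L-lipschitz_on UNIV \<psi>" and nonneg: "\<And>x. 0 \<le> \<psi> x"
    and supp: "\<And>x. x \<notin> closure (dyadic k m) \<Longrightarrow> \<psi> x = 0"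
    and int: "integrable \<mu> \<psi>" "integrable \<nu> \<psi>" "integrable \<mu> F" "integrable \<nu> F"
    and F_nonneg: "0 \<le> integral\<^sup>L \<nu> F"
  shows "\<bar>local_discrepancy \<mu> \<nu> (dyadic k m) (\<lambda>x. \<psi> x + F x)
            - local_discrepancy \<mu> \<nu> (dyadic (Suc k) m') F\<bar>
    \<le> L / 2^k * dyalpha \<mu> \<nu> (dyadic k m) * measure \<mu> (dyadic k m)
      + integral\<^sup>L \<nu> F / measure \<nu> (dyadic (Suc k) m') * dyDelta_mass \<mu> \<nu> (dyadic k m)"
proof -
  define I where "I = dyadic k m"
  define J where "J = dyadic (Suc k) m'"
  define c where "c = integral\<^sup>L \<nu> F / measure \<nu> J"
  have "local_discrepancy \<mu> \<nu> I (\<lambda>x. \<psi> x + F x) - local_discrepancy \<mu> \<nu> J F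
      = local_discrepancy \<mu> \<nu> I \<psi>
        + c * (measure \<mu> J - measure \<mu> I * measure \<nu> J / measure \<nu> I)"
    unfolding local_discrepancy_def c_def using int pos
    by (simp add: I_def J_def field_simps)
  moreover have "\<bar>local_discrepancy \<mu> \<nu> I \<psi>\<bar>
      \<le> L / 2^k * dyalpha \<mu> \<nu> I * measure \<mu> I"
    unfolding I_def by (rule local_discrepancy_dyadic_bump[OF \<mu> \<nu> pos(1) lip nonneg supp])
  moreover have "\<bar>c * (measure \<mu> J - measure \<mu> I * measure \<nu> J / measure \<nu> I)\<bar>
      = c * dyDelta_mass \<mu> \<nu> I"
    using dyadic_child_mass_defect[OF \<mu> \<nu> pos(1) child] F_nonneg pos(2)
    by (simp add: abs_mult c_def I_def J_def)
  ultimately show ?thesis unfolding I_def J_def c_def by linarith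
qed

text \<open>No positivity of \<open>\<nu>(A)\<close> is needed, since \<open>\<mu>(A)/0 = 0\<close>.\<close>
lemma local_discrepancy_bound:
  fixes f :: "real \<Rightarrow> real"
  assumes \<mu>: "finite_measure \<mu>" "sets \<mu> = sets borel"
    and \<nu>: "finite_measure \<nu>" "sets \<nu> = sets borel" and A: "A \<in> sets borel"
    and f: "f \<in> borel_measurable borel" "\<And>x. 0 \<le> f x" "\<And>x. f x \<le> C"
    and zero: "\<And>x. x \<notin> A \<Longrightarrow> f x = 0"
  shows "\<bar>local_discrepancy \<mu> \<nu> A f\<bar> \<le> C * measure \<mu> A"
proof -
  have C: "0 \<le> C" using f(2,3)[of 0] by linarith
  have "0 \<le> integral\<^sup>L \<mu> f" "integral\<^sup>L \<mu> f \<le> C * measure \<mu> A"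
    using integral_le_bound_times_measure[OF \<mu> A f zero] f(2) by simp_all
  moreover have "0 \<le> integral\<^sup>L \<nu> f" "integral\<^sup>L \<nu> f \<le> C * measure \<nu> A"
    using integral_le_bound_times_measure[OF \<nu> A f zero] f(2) by simp_all
  then have "0 \<le> measure \<mu> A / measure \<nu> A * integral\<^sup>L \<nu> f"
    "measure \<mu> A / measure \<nu> A * integral\<^sup>L \<nu> f \<le> C * measure \<mu> A"
  proof -
    show "0 \<le> measure \<mu> A / measure \<nu> A * integral\<^sup>L \<nu> f"
      using \<open>0 \<le> integral\<^sup>L \<nu> f\<close> by simp
    show "measure \<mu> A / measure \<nu> A * integral\<^sup>L \<nu> f \<le> C * measure \<mu> A"
    proof (cases "measure \<nu> A = 0")
      case False
      have "measure \<mu> A / measure \<nu> A * integral\<^sup>L \<nu> f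
          \<le> measure \<mu> A / measure \<nu> A * (C * measure \<nu> A)"
        using \<open>integral\<^sup>L \<nu> f \<le> C * measure \<nu> A\<close> by (intro mult_left_mono) simp_all
      also have "\<dots> = C * measure \<mu> A" using False by simp
      finally show ?thesis .
    qed (use C in simp)
  qed
  ultimately show ?thesis unfolding local_discrepancy_def by linarith
qed

lemma abs_telescope_le:
  fixes E T :: "nat \<Rightarrow> real"
  assumes "\<And>k. \<bar>E k - E (Suc k)\<bar> \<le> T k"
  shows "\<bar>E 0\<bar> \<le> (\<Sum>k\<le>N. T k) + \<bar>E (Suc N)\<bar>"
proof -
  have "E 0 - E (Suc N) = (\<Sum>k\<le>N. E k - E (Suc k))"
    unfolding lessThan_Suc_atMost[symmetric] by (rule sum_lessThan_telescope'[symmetric])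
  also have "\<bar>\<dots>\<bar> \<le> (\<Sum>k\<le>N. \<bar>E k - E (Suc k)\<bar>)" by (rule sum_abs)
  also have "\<dots> \<le> (\<Sum>k\<le>N. T k)" by (intro sum_mono assms)
  finally show ?thesis by linarith
qed

lemma ennreal_le_sums_plus_limit:
  fixes a b r :: "nat \<Rightarrow> real"
  assumes bound: "\<And>N. x \<le> (\<Sum>k\<le>N. a k) + (\<Sum>k\<le>N. b k) + r N"
    and nonneg: "\<And>k. 0 \<le> a k" "\<And>k. 0 \<le> b k" "\<And>N. 0 \<le> r N"
    and lim: "r \<longlonglongrightarrow> \<rho>"
  shows "ennreal x \<le> (\<Sum>k. ennreal (a k)) + (\<Sum>k. ennreal (b k)) + ennreal \<rho>"
proof -
  have "ennreal x \<le> (\<Sum>k. ennreal (a k)) + (\<Sum>k. ennreal (b k)) + ennreal (r N)" for N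
  proof -
    have "ennreal x \<le> ennreal ((\<Sum>k\<le>N. a k) + (\<Sum>k\<le>N. b k) + r N)"
      using bound by (rule ennreal_leI)
    also have "\<dots> = (\<Sum>k\<le>N. ennreal (a k)) + (\<Sum>k\<le>N. ennreal (b k)) + ennreal (r N)"
      using nonneg by (simp add: ennreal_plus sum_nonneg)
    also have "\<dots> \<le> (\<Sum>k. ennreal (a k)) + (\<Sum>k. ennreal (b k)) + ennreal (r N)"
      by (intro add_mono sum_le_suminf) auto
    finally show ?thesis .
  qed
  then show ?thesis
    by (intro LIMSEQ_le_const[OF tendsto_add[OF tendsto_const tendsto_ennrealI[OF lim]]]) auto
qed

lemma bounded_nonneg_series_tails:
  fixes f :: "nat \<Rightarrow> 'a \<Rightarrow> real"
  assumes nonneg: "\<And>j x. 0 \<le> f j x" and bdd: "\<And>x n. (\<Sum>j<n. f j x) \<le> B"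
  defines "S \<equiv> \<lambda>k x. \<Sum>j. f (j + k) x"
  shows "S k x = f k x + S (Suc k) x" and "0 \<le> S k x" and "S k x \<le> (SUP y. \<bar>\<Sum>j. f j y\<bar>)"
    and "0 \<le> (SUP y. \<bar>\<Sum>j. f j y\<bar>)"
proof -
  have summable: "summable (\<lambda>j. f j y)" for y
    by (rule summableI_nonneg_bounded[where x = B]) (use nonneg bdd in auto)
  then have tail_summable: "summable (\<lambda>j. f (j + k) y)" for k y
    by (rule summable_ignore_initial_segment)
  show "S k x = f k x + S (Suc k) x"
    using suminf_split_head[OF tail_summable[of k x]] by (simp add: S_def)
  show "0 \<le> S k x" unfolding S_def by (intro suminf_nonneg tail_summable nonneg)
  have "(\<Sum>j. f j x) = S k x + (\<Sum>i<k. f i x)"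
    unfolding S_def by (rule suminf_split_initial_segment[OF summable])
  moreover have "0 \<le> (\<Sum>i<k. f i x)" by (intro sum_nonneg nonneg)
  moreover have "\<bar>\<Sum>j. f j y\<bar> \<le> B" for y
    using suminf_nonneg[OF summable nonneg] suminf_le_const[OF summable bdd] by simp
  then have sup_upper: "\<bar>\<Sum>j. f j z\<bar> \<le> (SUP y. \<bar>\<Sum>j. f j y\<bar>)" for z
    by (intro cSUP_upper bdd_aboveI2) auto
  ultimately show "S k x \<le> (SUP y. \<bar>\<Sum>j. f j y\<bar>)" using sup_upper[of x] by linarith
  show "0 \<le> (SUP y. \<bar>\<Sum>j. f j y\<bar>)" using sup_upper[of x] by linarith
qed

locale dyadic_bump_chain =
  fixes \<mu> \<nu> :: "real measure" and I :: "nat \<Rightarrow> real set" and m :: "nat \<Rightarrow> nat"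
    and \<psi> F :: "nat \<Rightarrow> real \<Rightarrow> real" and L :: "nat \<Rightarrow> real" and C :: real
  assumes \<mu>: "finite_measure \<mu>" "sets \<mu> = sets borel"
    and \<nu>: "finite_measure \<nu>" "sets \<nu> = sets borel"
    and I: "\<And>k. I k = dyadic k (m k)" and child: "\<And>k. m (Suc k) = 2 * m k \<or> m (Suc k) = 2 * m k + 1"
    and pos: "\<And>k. measure \<nu> (I k) > 0"
    and lip: "\<And>k. (L k)-lipschitz_on UNIV (\<psi> k)" and \<psi>_nonneg: "\<And>k x. 0 \<le> \<psi> k x"
    and supp: "\<And>k x. x \<notin> closure (I k) \<Longrightarrow> \<psi> k x = 0"
    and F_rec: "\<And>k x. F k x = \<psi> k x + F (Suc k) x"
    and F_nonneg: "\<And>k x. 0 \<le> F k x" and F_le: "\<And>k x. F k x \<le> C"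
    and F_zero: "\<And>k x. x \<notin> I k \<Longrightarrow> F k x = 0"
    and F_meas: "\<And>k. F k \<in> borel_measurable borel"
begin

lemma integrable_bumps_and_tails:
  assumes "finite_measure M" "sets M = sets borel"
  shows "integrable M (\<psi> k)" "integrable M (F k)"
proof -
  have "\<psi> k x \<le> C" for x using F_rec[of k x] F_nonneg[of "Suc k" x] F_le[of k x] by linarith
  then show "integrable M (\<psi> k)"
    using \<psi>_nonneg by (intro integrable_bounded_borel[OF assms lipschitz_on_borel_measurable[OF lip],
        where B = C]) (simp add: abs_of_nonneg)
  show "integrable M (F k)"
    using F_nonneg F_le by (intro integrable_bounded_borel[OF assms F_meas, where B = C])
      (simp add: abs_of_nonneg)
qed

lemma discrepancy_increment:
  "\<bar>local_discrepancy \<mu> \<nu> (I k) (F k) - local_discrepancy \<mu> \<nu> (I (Suc k)) (F (Suc k))\<bar>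
    \<le> L k / 2 ^ k * dyalpha \<mu> \<nu> (I k) * measure \<mu> (I k)
      + integral\<^sup>L \<nu> (F (Suc k)) / measure \<nu> (I (Suc k)) * dyDelta_mass \<mu> \<nu> (I k)"
proof -
  note integrable = integrable_bumps_and_tails(1)[OF \<mu>] integrable_bumps_and_tails(1)[OF \<nu>]
    integrable_bumps_and_tails(2)[OF \<mu>] integrable_bumps_and_tails(2)[OF \<nu>]
  have "\<bar>local_discrepancy \<mu> \<nu> (I k) (\<lambda>x. \<psi> k x + F (Suc k) x)
      - local_discrepancy \<mu> \<nu> (I (Suc k)) (F (Suc k))\<bar>
    \<le> L k / 2 ^ k * dyalpha \<mu> \<nu> (I k) * measure \<mu> (I k)
      + integral\<^sup>L \<nu> (F (Suc k)) / measure \<nu> (I (Suc k)) * dyDelta_mass \<mu> \<nu> (I k)"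
    unfolding I
    by (rule local_discrepancy_step[OF \<mu> \<nu> pos[of k, unfolded I] pos[of "Suc k", unfolded I]
        child[of k] lip[of k] \<psi>_nonneg[of k] supp[where k = k, unfolded I] integrable])
      (auto intro!: integral_nonneg_AE simp: F_nonneg)
  moreover have "F k = (\<lambda>x. \<psi> k x + F (Suc k) x)" using F_rec by blast
  ultimately show ?thesis by simp
qed

lemma partial_sum_bound:
  "\<bar>local_discrepancy \<mu> \<nu> (I 0) (F 0)\<bar>
    \<le> (\<Sum>k\<le>N. L k / 2 ^ k * dyalpha \<mu> \<nu> (I k) * measure \<mu> (I k))
      + (\<Sum>k\<le>N. integral\<^sup>L \<nu> (F (Suc k)) / measure \<nu> (I (Suc k)) * dyDelta_mass \<mu> \<nu> (I k))
      + C * measure \<mu> (I (Suc N))"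
proof -
  have "\<bar>local_discrepancy \<mu> \<nu> (I (Suc N)) (F (Suc N))\<bar> \<le> C * measure \<mu> (I (Suc N))"
    by (rule local_discrepancy_bound[OF \<mu> \<nu> _ F_meas F_nonneg F_le F_zero]) (simp add: I)
  moreover note abs_telescope_le[where E = "\<lambda>k. local_discrepancy \<mu> \<nu> (I k) (F k)",
      OF discrepancy_increment, of N]
  ultimately show ?thesis unfolding sum.distrib by linarith
qed

lemma series_bound:
  "ennreal \<bar>local_discrepancy \<mu> \<nu> (I 0) (F 0)\<bar>
    \<le> (\<Sum>k. ennreal (L k / 2 ^ k * dyalpha \<mu> \<nu> (I k) * measure \<mu> (I k)))
      + (\<Sum>k. ennreal (integral\<^sup>L \<nu> (F (Suc k)) / measure \<nu> (I (Suc k)) * dyDelta_mass \<mu> \<nu> (I k)))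
      + ennreal (C * measure \<mu> (\<Inter>j. I j))"
proof (rule ennreal_le_sums_plus_limit[OF partial_sum_bound])
  show "0 \<le> L k / 2 ^ k * dyalpha \<mu> \<nu> (I k) * measure \<mu> (I k)" for k
  proof -
    have "0 \<le> dyalpha \<mu> \<nu> (I k)"
      unfolding dyalpha_def using \<mu> \<nu> by (intro W1_nonneg finite_measure_blowup) (simp_all add: I)
    moreover have "0 \<le> L k" using lip lipschitz_on_nonneg by blast
    ultimately show ?thesis by simp
  qed
  show "0 \<le> integral\<^sup>L \<nu> (F (Suc k)) / measure \<nu> (I (Suc k)) * dyDelta_mass \<mu> \<nu> (I k)" for k
    using F_nonneg pos[of "Suc k"] by (simp add: integral_nonneg_AE dyDelta_mass_def dyDelta_def)
  have "0 \<le> C" using F_nonneg[of 0 0] F_le[of 0 0] by linarith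
  then show "0 \<le> C * measure \<mu> (I (Suc N))" for N by simp
  have "decseq I" by (rule decseq_dyadic_chain[OF I child])
  moreover have "range I \<subseteq> sets \<mu>" using \<mu>(2) by (simp add: I dyadic_def image_subset_iff)
  ultimately have "(\<lambda>N. measure \<mu> (I N)) \<longlonglongrightarrow> measure \<mu> (\<Inter>j. I j)"
    using finite_measure.finite_Lim_measure_decseq[OF \<mu>(1)] by blast
  then show "(\<lambda>N. C * measure \<mu> (I (Suc N))) \<longlonglongrightarrow> C * measure \<mu> (\<Inter>j. I j)"
    by (intro tendsto_mult_left) (rule LIMSEQ_Suc)
qed

end

lemma dyadic_bump_chainI:
  fixes \<mu> \<nu> :: "real measure" and I :: "nat \<Rightarrow> real set" and m :: "nat \<Rightarrow> nat"
    and \<psi> :: "nat \<Rightarrow> real \<Rightarrow> real" and L :: "nat \<Rightarrow> real"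
  assumes \<mu>: "finite_measure \<mu>" "sets \<mu> = sets borel"
    and \<nu>: "finite_measure \<nu>" "sets \<nu> = sets borel"
    and I: "\<And>k. I k = dyadic k (m k)" and child: "\<And>k. m (Suc k) = 2 * m k \<or> m (Suc k) = 2 * m k + 1"
    and pos: "\<And>k. measure \<nu> (I k) > 0"
    and lip: "\<And>k. (L k)-lipschitz_on UNIV (\<psi> k)" and \<psi>_nonneg: "\<And>k x. 0 \<le> \<psi> k x"
    and supp: "\<And>k x. x \<notin> closure (I k) \<Longrightarrow> \<psi> k x = 0"
    and bdd: "\<And>x n. (\<Sum>j<n. \<psi> j x) \<le> B" and C: "(SUP x. \<bar>\<Sum>j. \<psi> j x\<bar>) \<le> C"
  shows "dyadic_bump_chain \<mu> \<nu> I m \<psi> (\<lambda>k x. \<Sum>j. \<psi> (j + k) x) L C"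
proof (rule dyadic_bump_chain.intro)
  note tails = bounded_nonneg_series_tails[OF \<psi>_nonneg bdd]
  show "(\<Sum>j. \<psi> (j + k) x) = \<psi> k x + (\<Sum>j. \<psi> (j + Suc k) x)" for k x by (rule tails(1))
  show "0 \<le> (\<Sum>j. \<psi> (j + k) x)" for k x by (rule tails(2))
  show "(\<Sum>j. \<psi> (j + k) x) \<le> C" for k x using tails(3) C by (rule order_trans)
  show "(\<lambda>x. \<Sum>j. \<psi> (j + k) x) \<in> borel_measurable borel" for k
    by (intro borel_measurable_suminf lipschitz_on_borel_measurable[OF lip])
  show "(\<Sum>j. \<psi> (j + k) x) = 0" if "x \<notin> I k" for k x
  proof -
    have "x \<notin> I (j + k)" for j
      using that decseqD[OF decseq_dyadic_chain[OF I child], of k "j + k"] by auto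
    then have "\<psi> (j + k) x = 0" for j
      using lipschitz_zero_outside_dyadic[OF lip supp[unfolded I]] by (simp add: I)
    then show ?thesis by simp
  qed
qed (fact \<mu> \<nu> I child pos lip \<psi>_nonneg supp)+

theorem mainTheorem13:
  fixes \<mu> \<nu> :: "real measure" and D :: real
    and I :: "nat \<Rightarrow> real set"
    and \<psi> :: "nat \<Rightarrow> real \<Rightarrow> real" and L :: "nat \<Rightarrow> real"
  assumes mu_borel: "sets \<mu> = sets borel" and mu_prob: "prob_space \<mu>"
    and mu_supp: "emeasure \<mu> {0..<1} = 1"
    and nu_borel: "sets \<nu> = sets borel" and nu_prob: "prob_space \<nu>"
    and nu_supp: "emeasure \<nu> {0..<1} = 1"
    and doubling: "dyadic_doubling \<nu> D"
    and I_dyadic: "\<forall>j. \<exists>m < 2 ^ j. I j = dyadic j m"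
    and I_nested: "\<forall>j. I (Suc j) \<subseteq> I j"
    and psi_nonneg: "\<forall>j x. 0 \<le> \<psi> j x"
    and psi_lip: "\<forall>j. (L j)-lipschitz_on UNIV (\<psi> j)"
    and psi_supp: "\<forall>j x. x \<notin> closure (I j) \<longrightarrow> \<psi> j x = 0"
    and Psi_bdd: "\<exists>B. \<forall>x n. (\<Sum>j<n. \<psi> j x) \<le> B"
  defines "Psi \<equiv> \<lambda>x. \<Sum>j. \<psi> j x"
    and "Psik \<equiv> \<lambda>k x. \<Sum>j. \<psi> (j + k) x"
    and "supPsi \<equiv> (SUP x. \<bar>\<Sum>j. \<psi> j x\<bar>)"
  shows "(\<forall>N::nat. \<bar>integral\<^sup>L \<mu> Psi - integral\<^sup>L \<nu> Psi\<bar>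
            \<le> (\<Sum>k\<le>N. L k / 2 ^ k * dyalpha \<mu> \<nu> (I k) * measure \<mu> (I k))
              + (\<Sum>k\<le>N. (integral\<^sup>L \<nu> (Psik (Suc k)) / measure \<nu> (I (Suc k)))
                          * dyDelta_mass \<mu> \<nu> (I k))
              + 2 * supPsi * measure \<mu> (I (Suc N)))
       \<and> ennreal \<bar>integral\<^sup>L \<mu> Psi - integral\<^sup>L \<nu> Psi\<bar>
            \<le> (\<Sum>k. ennreal (L k / 2 ^ k * dyalpha \<mu> \<nu> (I k) * measure \<mu> (I k)))
              + (\<Sum>k. ennreal ((integral\<^sup>L \<nu> (Psik (Suc k)) / measure \<nu> (I (Suc k)))
                          * dyDelta_mass \<mu> \<nu> (I k)))
              + ennreal (2 * supPsi * measure \<mu> (\<Inter>j. I j))"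
proof -
  interpret \<mu>: prob_space \<mu> by fact
  interpret \<nu>: prob_space \<nu> by fact
  note \<mu> = \<mu>.finite_measure_axioms mu_borel and \<nu> = \<nu>.finite_measure_axioms nu_borel
  obtain m where m: "\<And>j. m j < 2 ^ j" and I: "\<And>j. I j = dyadic j (m j)"
    and child: "\<And>j. m (Suc j) = 2 * m j \<or> m (Suc j) = 2 * m j + 1"
    using nested_dyadic_chain[OF I_dyadic I_nested] by blast
  have "m 0 = 0" using m[of 0] by simp
  then have "I 0 = {0..<1}" by (simp add: I dyadic_def)
  then have unit: "measure \<mu> (I 0) = 1" "measure \<nu> (I 0) = 1"
    using mu_supp nu_supp by (simp_all add: \<mu>.emeasure_eq_measure \<nu>.emeasure_eq_measure)
  have pos: "measure \<nu> (I k) > 0" for k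
    using dyadic_doubling_measure_pos[OF doubling _ m] unit(2) \<open>m 0 = 0\<close> by (simp add: I)
  obtain B where B: "\<And>x n. (\<Sum>j<n. \<psi> j x) \<le> B" using Psi_bdd by blast
  have "0 \<le> supPsi"
    unfolding supPsi_def by (rule bounded_nonneg_series_tails(4)[OF psi_nonneg[rule_format] B])
  then have sup_bound: "(SUP x. \<bar>\<Sum>j. \<psi> j x\<bar>) \<le> 2 * supPsi"
    unfolding supPsi_def by linarith
  interpret chain: dyadic_bump_chain \<mu> \<nu> I m \<psi> Psik L "2 * supPsi"
    unfolding Psik_def
    by (rule dyadic_bump_chainI[OF \<mu> \<nu> I child pos psi_lip[rule_format]
        psi_nonneg[rule_format] psi_supp[rule_format] B sup_bound])
  have "local_discrepancy \<mu> \<nu> (I 0) (Psik 0) = integral\<^sup>L \<mu> Psi - integral\<^sup>L \<nu> Psi"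
    using unit by (simp add: local_discrepancy_def Psik_def Psi_def)
  with chain.partial_sum_bound chain.series_bound show ?thesis by auto
qed

end
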